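(* Let $n\ge2$ and let $P_i$ ($1\le i\le n$) be an indecomposable projective $\Lambda_n^2$-module. Then the $\tau$-perpendicular category $J(P_i)$ of $P_i$ in $\mathrm{mod}\,\Lambda_n^2$ is equivalent to $\mathrm{mod}\,\Gamma_{n-1}^2$.
   Context: $\mathbb{F}$ is an algebraically closed field, $\mathrm{mod}\,A$ the category of finitely generated left modules over a finite dimensional algebra $A$, $\tau$ the Auslander–Reiten translation. For $\tau$-rigid $M$ (i.e. $\mathrm{Hom}(M,\tau M)=0$), $J(M)=\{X:\mathrm{Hom}(M,X)=0,\ \mathrm{Hom}(X,\tau M)=0\}$. $A_m$ is the quiver $1\to2\to\cdots\to m$, $C_n$ the cyclic quiver $1\to2\to\cdots\to n\to1$; with $R$ the arrow ideal, $\Gamma_m^2=\mathbb{F}A_m/R^2$ (so $\Gamma_1^2=\mathbb{F}$) and $\Lambda_n^2=\mathbb{F}C_n/R^2$. *)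

theory Defs
  imports "Jordan_Normal_Form.Matrix" "HOL-Computational_Algebra.Polynomial"
begin

text \<open>
  For a quiver Q with arrow ideal R, finitely generated left modules over the
  radical-square-zero algebra FQ/R^2 are identified (as usual) with finite dimensional
  representations of Q in which every composite of two consecutive arrows is zero.
  A representation is stored with F^(d v) at vertex v and a (d w x d u) matrix for an
  arrow (u,w); data outside the quiver is normalised to zero so that equality is canonical.
\<close>

type_synonym quiver = "nat set \<times> (nat \<times> nat) set"

text \<open>The cyclic quiver C_n on vertices 0..n-1 (paper's vertex k is k-1 here) and the
  linearly oriented A_m on vertices 0..m-1.\<close>
definition Lambda2 :: "nat \<Rightarrow> quiver" where
  "Lambda2 n = ({0..<n}, {(k, Suc k mod n) | k. k < n})"

definition Gamma2 :: "nat \<Rightarrow> quiver" where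
  "Gamma2 m = ({0..<m}, {(k, Suc k) | k. Suc k < m})"

record 'a rep =
  rdim :: "nat \<Rightarrow> nat"
  rmap :: "nat \<times> nat \<Rightarrow> 'a mat"

definition is_rep :: "quiver \<Rightarrow> 'a::field rep \<Rightarrow> bool" where
  "is_rep Q M \<longleftrightarrow>
     (\<forall>v. v \<notin> fst Q \<longrightarrow> rdim M v = 0) \<and>
     (\<forall>e \<in> snd Q. rmap M e \<in> carrier_mat (rdim M (snd e)) (rdim M (fst e))) \<and>
     (\<forall>e. e \<notin> snd Q \<longrightarrow> rmap M e = zero_mat (rdim M (snd e)) (rdim M (fst e))) \<and>
     (\<forall>u w x. (u, w) \<in> snd Q \<longrightarrow> (w, x) \<in> snd Q \<longrightarrow>
        rmap M (w, x) * rmap M (u, w) = zero_mat (rdim M x) (rdim M u))"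

definition is_hom :: "quiver \<Rightarrow> 'a::field rep \<Rightarrow> 'a rep \<Rightarrow> (nat \<Rightarrow> 'a mat) \<Rightarrow> bool" where
  "is_hom Q M N h \<longleftrightarrow>
     (\<forall>v \<in> fst Q. h v \<in> carrier_mat (rdim N v) (rdim M v)) \<and>
     (\<forall>v. v \<notin> fst Q \<longrightarrow> h v = zero_mat (rdim N v) (rdim M v)) \<and>
     (\<forall>(u, w) \<in> snd Q. h w * rmap M (u, w) = rmap N (u, w) * h u)"

definition Hom :: "quiver \<Rightarrow> 'a::field rep \<Rightarrow> 'a rep \<Rightarrow> (nat \<Rightarrow> 'a mat) set" where
  "Hom Q M N = {h. is_hom Q M N h}"

definition comp_hom :: "(nat \<Rightarrow> 'a::field mat) \<Rightarrow> (nat \<Rightarrow> 'a mat) \<Rightarrow> (nat \<Rightarrow> 'a mat)" where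
  "comp_hom g h = (\<lambda>v. g v * h v)"

definition id_hom :: "quiver \<Rightarrow> 'a::field rep \<Rightarrow> (nat \<Rightarrow> 'a mat)" where
  "id_hom Q M = (\<lambda>v. if v \<in> fst Q then one_mat (rdim M v) else zero_mat (rdim M v) (rdim M v))"

definition hom_zero :: "quiver \<Rightarrow> 'a::field rep \<Rightarrow> 'a rep \<Rightarrow> bool" where
  "hom_zero Q M N \<longleftrightarrow> (\<forall>h \<in> Hom Q M N. \<forall>v \<in> fst Q. h v = zero_mat (rdim N v) (rdim M v))"

definition img :: "'a::field mat \<Rightarrow> 'a vec set" where
  "img A = {mult_mat_vec A x | x. x \<in> carrier_vec (dim_col A)}"

definition surj_hom :: "quiver \<Rightarrow> 'a::field rep \<Rightarrow> 'a rep \<Rightarrow> (nat \<Rightarrow> 'a mat) \<Rightarrow> bool" where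
  "surj_hom Q M N h \<longleftrightarrow> (\<forall>v \<in> fst Q. img (h v) = carrier_vec (rdim N v))"

definition isomorphic :: "quiver \<Rightarrow> 'a::field rep \<Rightarrow> 'a rep \<Rightarrow> bool" where
  "isomorphic Q M N \<longleftrightarrow> (\<exists>h g. is_hom Q M N h \<and> is_hom Q N M g \<and>
      comp_hom g h = id_hom Q M \<and> comp_hom h g = id_hom Q N)"

definition projective :: "quiver \<Rightarrow> 'a::field rep \<Rightarrow> bool" where
  "projective Q P \<longleftrightarrow> is_rep Q P \<and>
     (\<forall>X Y g h. is_rep Q X \<longrightarrow> is_rep Q Y \<longrightarrow> is_hom Q X Y g \<longrightarrow> surj_hom Q X Y g \<longrightarrow>
        is_hom Q P Y h \<longrightarrow> (\<exists>l. is_hom Q P X l \<and> comp_hom g l = h))"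

definition essential_epi :: "quiver \<Rightarrow> 'a::field rep \<Rightarrow> 'a rep \<Rightarrow> (nat \<Rightarrow> 'a mat) \<Rightarrow> bool" where
  "essential_epi Q P M p \<longleftrightarrow> is_hom Q P M p \<and> surj_hom Q P M p \<and>
     (\<forall>(Z::'a rep) h. is_rep Q Z \<longrightarrow> is_hom Q Z P h \<longrightarrow> surj_hom Q Z M (comp_hom p h) \<longrightarrow>
        surj_hom Q Z P h)"

text \<open>Minimal projective presentation P1 --f--> P0 --p--> M --> 0: p is a projective cover
  of M and f corestricts to a projective cover of ker p.\<close>
definition min_proj_pres ::
  "quiver \<Rightarrow> 'a::field rep \<Rightarrow> 'a rep \<Rightarrow> 'a rep \<Rightarrow> (nat \<Rightarrow> 'a mat) \<Rightarrow> (nat \<Rightarrow> 'a mat) \<Rightarrow> bool" where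
  "min_proj_pres Q M P0 P1 p f \<longleftrightarrow>
     projective Q P0 \<and> projective Q P1 \<and> essential_epi Q P0 M p \<and> is_hom Q P1 P0 f \<and>
     (\<forall>v \<in> fst Q. p v * f v = zero_mat (rdim M v) (rdim P1 v)) \<and>
     (\<forall>v \<in> fst Q. {x \<in> carrier_vec (rdim P0 v). mult_mat_vec (p v) x = zero_vec (rdim M v)}
                    \<subseteq> img (f v)) \<and>
     (\<forall>(Z::'a rep) h. is_rep Q Z \<longrightarrow> is_hom Q Z P1 h \<longrightarrow>
        (\<forall>v \<in> fst Q. img (f v * h v) = img (f v)) \<longrightarrow> surj_hom Q Z P1 h)"

text \<open>The indecomposable projective P_v = A e_v of FQ/R^2 (Q loopless): F at v, and F at the
  target of each arrow starting at v.\<close>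
definition proj_dim :: "quiver \<Rightarrow> nat \<Rightarrow> nat \<Rightarrow> nat" where
  "proj_dim Q v w = (if w \<in> fst Q then (if w = v then 1 else 0) + (if (v, w) \<in> snd Q then 1 else 0) else 0)"

definition proj_rep :: "quiver \<Rightarrow> nat \<Rightarrow> 'a::field rep" where
  "proj_rep Q v = \<lparr> rdim = proj_dim Q v,
     rmap = (\<lambda>e. if e \<in> snd Q \<and> fst e = v then one_mat 1
                 else zero_mat (proj_dim Q v (snd e)) (proj_dim Q v (fst e))) \<rparr>"

text \<open>For an arrow a : u \<rightarrow> w, right multiplication by a gives A e_w \<rightarrow> A e_u.\<close>
definition arrow_hom :: "quiver \<Rightarrow> nat \<Rightarrow> nat \<Rightarrow> (nat \<Rightarrow> 'a::field mat)" where
  "arrow_hom Q u w = (\<lambda>x. if x = w then one_mat 1 else zero_mat (proj_dim Q u x) (proj_dim Q w x))"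

text \<open>Auslander--Reiten translate: N \<cong> D Tr M, where Tr M = coker Hom_A(f, A) for a minimal
  projective presentation, the right module Hom_A(P1, A) having vertex-w part
  Hom_A(P1, A e_w).  The map g w identifies (Tr M) e_w with the dual of N_w (row vectors),
  compatibly with the arrows.\<close>
definition is_tau :: "quiver \<Rightarrow> 'a::field rep \<Rightarrow> 'a rep \<Rightarrow> bool" where
  "is_tau Q M N \<longleftrightarrow> is_rep Q N \<and>
     (\<exists>P0 P1 p f (g :: nat \<Rightarrow> (nat \<Rightarrow> 'a mat) \<Rightarrow> 'a vec).
        min_proj_pres Q M P0 P1 p f \<and>
        (\<forall>w \<in> fst Q.
           (\<forall>y \<in> Hom Q P1 (proj_rep Q w). g w y \<in> carrier_vec (rdim N w)) \<and>
           (\<forall>a b y y'. y \<in> Hom Q P1 (proj_rep Q w) \<longrightarrow> y' \<in> Hom Q P1 (proj_rep Q w) \<longrightarrow>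
               g w (\<lambda>v. smult_mat a (y v) + smult_mat b (y' v)) =
               smult_vec a (g w y) + smult_vec b (g w y')) \<and>
           (\<forall>\<xi> \<in> carrier_vec (rdim N w). \<exists>y \<in> Hom Q P1 (proj_rep Q w). g w y = \<xi>) \<and>
           (\<forall>y \<in> Hom Q P1 (proj_rep Q w).
               g w y = zero_vec (rdim N w) \<longleftrightarrow>
               (\<exists>h \<in> Hom Q P0 (proj_rep Q w). y = comp_hom h f))) \<and>
        (\<forall>(u, w) \<in> snd Q. \<forall>y \<in> Hom Q P1 (proj_rep Q w).
           g u (comp_hom (arrow_hom Q u w) y) = mult_mat_vec (transpose_mat (rmap N (u, w))) (g w y)))"

definition tau_perp :: "quiver \<Rightarrow> 'a::field rep \<Rightarrow> 'a rep set" where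
  "tau_perp Q M = {X. is_rep Q X \<and> hom_zero Q M X \<and> (\<forall>N. is_tau Q M N \<longrightarrow> hom_zero Q X N)}"

definition cat_equivalent :: "quiver \<Rightarrow> 'a::field rep set \<Rightarrow> quiver \<Rightarrow> bool" where
  "cat_equivalent Q C Q' \<longleftrightarrow>
     (\<exists>(F :: 'a rep \<Rightarrow> 'a rep) (G :: 'a rep \<Rightarrow> 'a rep \<Rightarrow> (nat \<Rightarrow> 'a mat) \<Rightarrow> (nat \<Rightarrow> 'a mat)).
        (\<forall>X \<in> C. is_rep Q' (F X)) \<and>
        (\<forall>X \<in> C. \<forall>Y \<in> C. \<forall>h \<in> Hom Q X Y. G X Y h \<in> Hom Q' (F X) (F Y)) \<and>
        (\<forall>X \<in> C. G X X (id_hom Q X) = id_hom Q' (F X)) \<and>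
        (\<forall>X \<in> C. \<forall>Y \<in> C. \<forall>Z \<in> C. \<forall>h \<in> Hom Q X Y. \<forall>g \<in> Hom Q Y Z.
            G X Z (comp_hom g h) = comp_hom (G Y Z g) (G X Y h)) \<and>
        (\<forall>X \<in> C. \<forall>Y \<in> C. inj_on (G X Y) (Hom Q X Y)) \<and>
        (\<forall>X \<in> C. \<forall>Y \<in> C. G X Y ` Hom Q X Y = Hom Q' (F X) (F Y)) \<and>
        (\<forall>Y. is_rep Q' Y \<longrightarrow> (\<exists>X \<in> C. isomorphic Q' (F X) Y)))"

end

theory Submission
  imports Defs
begin

text \<open>
  Homomorphisms out of the indecomposable projective P_v correspond (Yoneda) to vectors of X_v,
  so Hom(P_v, X) = 0 iff X_v = 0.  An essential epimorphism onto P_v splits and is therefore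
  injective; hence a minimal projective presentation of P_v has P_1 = 0 and tau P_v = 0, so J(P_i)
  is the full subcategory of representations vanishing at i.  Deleting the vertex i of the cyclic
  quiver C_n leaves the linear quiver A_(n-1), numbered from i + 1 on, and restriction to the
  remaining vertices is an isomorphism from that subcategory onto the representations of A_(n-1):
  the relations R^2 = 0 only involve paths avoiding i.
\<close>

lemma mat_eq_if_no_rows_or_cols:
  "A \<in> carrier_mat r c \<Longrightarrow> B \<in> carrier_mat r c \<Longrightarrow> r = 0 \<or> c = 0 \<Longrightarrow> A = B"
  by (rule eq_matI) auto

lemma zero_mult_mat_vec: "x \<in> carrier_vec nc \<Longrightarrow> 0\<^sub>m nr nc *\<^sub>v x = (0\<^sub>v nr :: 'a::semiring_0 vec)"
  by (rule eq_vecI) (auto simp: scalar_prod_def)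

lemma mult_mat_vec_zero: "A \<in> carrier_mat nr nc \<Longrightarrow> A *\<^sub>v 0\<^sub>v nc = (0\<^sub>v nr :: 'a::semiring_0 vec)"
  by (rule eq_vecI) auto

lemma mult_mat_of_cols_single:
  assumes "A \<in> carrier_mat m k" "x \<in> carrier_vec k"
  shows "A * mat_of_cols k [x] = mat_of_cols m [A *\<^sub>v x]"
  using assms by (intro eq_matI) (auto simp: mat_of_cols_index)

lemma mat_of_cols_single_zero: "mat_of_cols m [0\<^sub>v m] = 0\<^sub>m m 1"
  by (rule eq_matI) (auto simp: mat_of_cols_index)

lemma img_one_mat: "img (1\<^sub>m k :: 'a::field mat) = carrier_vec k"
  unfolding img_def by force

lemma img_no_cols: "A \<in> carrier_mat r 0 \<Longrightarrow> img (A :: 'a::field mat) = {0\<^sub>v r}"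
  unfolding img_def by (auto intro!: eq_vecI exI[of _ "0\<^sub>v 0"] simp: scalar_prod_def)

lemma img_eq_zero_vec_if_mult_zero:
  assumes "A \<in> carrier_mat r c" and "\<And>z. z \<in> carrier_vec c \<Longrightarrow> A *\<^sub>v z = 0\<^sub>v r"
  shows "img A = {0\<^sub>v r}"
  using assms unfolding img_def by (auto intro!: exI[of _ "0\<^sub>v c"])

lemma carrier_vec_singleton_imp_dim_0: "carrier_vec r = {0\<^sub>v r :: 'a::zero_neq_one vec} \<Longrightarrow> r = 0"
proof (rule ccontr)
  assume singleton: "carrier_vec r = {0\<^sub>v r :: 'a vec}" and "r \<noteq> 0"
  then have "vec r (\<lambda>_. 1) $ 0 \<noteq> (0\<^sub>v r :: 'a vec) $ 0" by simp
  moreover have "vec r (\<lambda>_. 1) \<in> carrier_vec r" by simp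
  ultimately show False using singleton by (metis singletonD)
qed

lemma rep_carrier: "is_rep Q M \<Longrightarrow> rmap M e \<in> carrier_mat (rdim M (snd e)) (rdim M (fst e))"
  unfolding is_rep_def by (cases "e \<in> snd Q"; cases e) auto

lemma rep_outside: "is_rep Q M \<Longrightarrow> v \<notin> fst Q \<Longrightarrow> rdim M v = 0"
  unfolding is_rep_def by blast

lemma rep_radical_square_zero:
  "is_rep Q M \<Longrightarrow> (u, w) \<in> snd Q \<Longrightarrow> (w, x) \<in> snd Q \<Longrightarrow>
   rmap M (w, x) * rmap M (u, w) = 0\<^sub>m (rdim M x) (rdim M u)"
  unfolding is_rep_def by blast

lemma hom_carrier: "is_hom Q M N h \<Longrightarrow> h v \<in> carrier_mat (rdim N v) (rdim M v)"
  unfolding is_hom_def by (cases "v \<in> fst Q") auto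

lemma hom_commutes: "is_hom Q M N h \<Longrightarrow> (u, w) \<in> snd Q \<Longrightarrow> h w * rmap M (u, w) = rmap N (u, w) * h u"
  unfolding is_hom_def by blast

lemma hom_outside: "is_hom Q M N h \<Longrightarrow> v \<notin> fst Q \<Longrightarrow> h v = 0\<^sub>m (rdim N v) (rdim M v)"
  unfolding is_hom_def by blast

lemma is_homI:
  assumes "\<And>v. h v \<in> carrier_mat (rdim N v) (rdim M v)"
    and "\<And>v. v \<notin> fst Q \<Longrightarrow> h v = 0\<^sub>m (rdim N v) (rdim M v)"
    and "\<And>u w. (u, w) \<in> snd Q \<Longrightarrow> h w * rmap M (u, w) = rmap N (u, w) * h u"
  shows "is_hom Q M N h"
  using assms unfolding is_hom_def by auto

definition zero_rep :: "'a::field rep" where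
  "zero_rep = \<lparr>rdim = \<lambda>_. 0, rmap = \<lambda>_. 0\<^sub>m 0 0\<rparr>"

lemma is_rep_zero_rep: "is_rep Q zero_rep"
  by (simp add: is_rep_def zero_rep_def)

lemma is_hom_zero:
  assumes X: "is_rep Q X" and Y: "is_rep Q Y"
  shows "is_hom Q X Y (\<lambda>v. 0\<^sub>m (rdim Y v) (rdim X v))"
proof (rule is_homI)
  fix u w assume "(u, w) \<in> snd Q"
  show "0\<^sub>m (rdim Y w) (rdim X w) * rmap X (u, w) = rmap Y (u, w) * 0\<^sub>m (rdim Y u) (rdim X u)"
    using rep_carrier[OF X, of "(u, w)"] rep_carrier[OF Y, of "(u, w)"]
    by (simp add: left_mult_zero_mat right_mult_zero_mat)
qed auto

locale wf_quiver =
  fixes Q :: quiver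
  assumes arrow_vertices: "(u, w) \<in> snd Q \<Longrightarrow> u \<in> fst Q \<and> w \<in> fst Q"
begin

lemma is_hom_id_hom: "is_rep Q X \<Longrightarrow> is_hom Q X X (id_hom Q X)"
proof (rule is_homI)
  fix u w assume "is_rep Q X" and "(u, w) \<in> snd Q"
  then show "id_hom Q X w * rmap X (u, w) = rmap X (u, w) * id_hom Q X u"
    using arrow_vertices rep_carrier[of Q X "(u, w)"] by (simp add: id_hom_def)
qed (auto simp: id_hom_def)

lemma isomorphic_refl: "is_rep Q X \<Longrightarrow> isomorphic Q X X"
proof -
  assume "is_rep Q X"
  moreover have "comp_hom (id_hom Q X) (id_hom Q X) = id_hom Q X"
    by (rule ext) (simp add: comp_hom_def id_hom_def)
  ultimately show ?thesis unfolding isomorphic_def using is_hom_id_hom by blast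
qed

end

section \<open>Indecomposable projectives of radical square zero algebras\<close>

lemma rdim_proj_rep: "rdim (proj_rep Q v) = proj_dim Q v"
  by (simp add: proj_rep_def)

text \<open>The generator e_v of P_v is the vector unit_vec 1 0 at vertex v; yoneda_hom Q v X x
  is the homomorphism P_v \<rightarrow> X sending it to x.\<close>

definition yoneda_hom :: "quiver \<Rightarrow> nat \<Rightarrow> 'a::field rep \<Rightarrow> 'a vec \<Rightarrow> nat \<Rightarrow> 'a mat" where
  "yoneda_hom Q v X x w =
     (if w = v then mat_of_cols (rdim X v) [x]
      else if (v, w) \<in> snd Q then mat_of_cols (rdim X w) [rmap X (v, w) *\<^sub>v x]
      else 0\<^sub>m (rdim X w) 0)"

lemma rmap_mult_yoneda_hom_at_arrow_target:
  assumes X: "is_rep Q X" and x: "x \<in> carrier_vec (rdim X v)"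
    and "u \<noteq> v" and vu: "(v, u) \<in> snd Q" and uw: "(u, w) \<in> snd Q"
  shows "rmap X (u, w) * yoneda_hom Q v X x u = 0\<^sub>m (rdim X w) 1"
proof -
  have Xuw: "rmap X (u, w) \<in> carrier_mat (rdim X w) (rdim X u)"
    and Xvu: "rmap X (v, u) \<in> carrier_mat (rdim X u) (rdim X v)"
    using rep_carrier[OF X, of "(u, w)"] rep_carrier[OF X, of "(v, u)"] by auto
  have "rmap X (u, w) * yoneda_hom Q v X x u =
      mat_of_cols (rdim X w) [rmap X (u, w) *\<^sub>v (rmap X (v, u) *\<^sub>v x)]"
    using assms Xuw Xvu by (simp add: yoneda_hom_def mult_mat_of_cols_single)
  also have "rmap X (u, w) *\<^sub>v (rmap X (v, u) *\<^sub>v x) = (rmap X (u, w) * rmap X (v, u)) *\<^sub>v x"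
    using Xuw Xvu x by (simp add: assoc_mult_mat_vec)
  also have "\<dots> = 0\<^sub>v (rdim X w)"
    using rep_radical_square_zero[OF X vu uw] x by (simp add: zero_mult_mat_vec)
  finally show ?thesis
    by (simp add: mat_of_cols_single_zero)
qed

locale loopless_quiver = wf_quiver +
  assumes no_loop: "(u, u) \<notin> snd Q"
begin

lemma proj_dim_eq:
  "v \<in> fst Q \<Longrightarrow> proj_dim Q v w = (if w = v \<or> (v, w) \<in> snd Q then 1 else 0)"
  using arrow_vertices[of v w] no_loop[of v] by (auto simp: proj_dim_def)

lemma rmap_proj_rep_carrier:
  "v \<in> fst Q \<Longrightarrow> rmap (proj_rep Q v) e \<in> carrier_mat (proj_dim Q v (snd e)) (proj_dim Q v (fst e))"
  using no_loop arrow_vertices by (cases e) (auto simp: proj_rep_def proj_dim_eq)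

lemma is_rep_proj_rep:
  assumes v: "v \<in> fst Q"
  shows "is_rep Q (proj_rep Q v)"
  unfolding is_rep_def rdim_proj_rep
proof (intro conjI allI ballI impI)
  fix w assume "w \<notin> fst Q"
  then show "proj_dim Q v w = 0" by (simp add: proj_dim_def)
next
  fix e show "rmap (proj_rep Q v) e \<in> carrier_mat (proj_dim Q v (snd e)) (proj_dim Q v (fst e))"
    using v by (rule rmap_proj_rep_carrier)
next
  fix e assume "e \<notin> snd Q"
  then show "rmap (proj_rep Q v) e = 0\<^sub>m (proj_dim Q v (snd e)) (proj_dim Q v (fst e))"
    by (simp add: proj_rep_def)
next
  fix u w x assume "(u, w) \<in> snd Q" "(w, x) \<in> snd Q"
  moreover have "rmap (proj_rep Q v) (w, x) \<in> carrier_mat (proj_dim Q v x) (proj_dim Q v w)"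
    using rmap_proj_rep_carrier[OF v, of "(w, x)"] by simp
  ultimately show "rmap (proj_rep Q v) (w, x) * rmap (proj_rep Q v) (u, w) =
      0\<^sub>m (proj_dim Q v x) (proj_dim Q v u)"
    using v no_loop[of v] by (cases "u = v") (auto simp: proj_rep_def proj_dim_eq)
qed

lemma yoneda_hom_carrier:
  assumes X: "is_rep Q X" and v: "v \<in> fst Q" and x: "x \<in> carrier_vec (rdim X v)"
  shows "yoneda_hom Q v X x w \<in> carrier_mat (rdim X w) (proj_dim Q v w)"
  using rep_carrier[OF X, of "(v, w)"] x v by (auto simp: yoneda_hom_def proj_dim_eq)

lemma is_hom_yoneda_hom:
  assumes X: "is_rep Q X" and v: "v \<in> fst Q" and x: "x \<in> carrier_vec (rdim X v)"
  shows "is_hom Q (proj_rep Q v) X (yoneda_hom Q v X x)"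
proof (rule is_homI)
  fix w show "yoneda_hom Q v X x w \<in> carrier_mat (rdim X w) (rdim (proj_rep Q v) w)"
    using yoneda_hom_carrier[OF X v x] by (simp add: rdim_proj_rep)
next
  fix w assume "w \<notin> fst Q"
  then show "yoneda_hom Q v X x w = 0\<^sub>m (rdim X w) (rdim (proj_rep Q v) w)"
    using v arrow_vertices[of v w] by (auto simp: yoneda_hom_def rdim_proj_rep proj_dim_def)
next
  fix u w assume uw: "(u, w) \<in> snd Q"
  have Xuw: "rmap X (u, w) \<in> carrier_mat (rdim X w) (rdim X u)"
    using rep_carrier[OF X, of "(u, w)"] by simp
  have yw: "yoneda_hom Q v X x w \<in> carrier_mat (rdim X w) (proj_dim Q v w)"
    and yu: "yoneda_hom Q v X x u \<in> carrier_mat (rdim X u) (proj_dim Q v u)"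
    using yoneda_hom_carrier[OF X v x] by auto
  consider "u = v" | "u \<noteq> v" "(v, u) \<in> snd Q" | "u \<noteq> v" "(v, u) \<notin> snd Q" by blast
  then show "yoneda_hom Q v X x w * rmap (proj_rep Q v) (u, w) = rmap X (u, w) * yoneda_hom Q v X x u"
  proof cases
    case 1
    then have "w \<noteq> v" using uw no_loop by blast
    then show ?thesis using 1 uw Xuw x by (simp add: yoneda_hom_def proj_rep_def mult_mat_of_cols_single)
  next
    case 2
    have "rmap X (u, w) * yoneda_hom Q v X x u = 0\<^sub>m (rdim X w) 1"
      using rmap_mult_yoneda_hom_at_arrow_target[OF X x 2 uw] .
    moreover have "rmap (proj_rep Q v) (u, w) = (0\<^sub>m (proj_dim Q v w) 1 :: 'a mat)"
      using 2 v by (simp add: proj_rep_def proj_dim_eq)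
    ultimately show ?thesis using yw by (simp add: right_mult_zero_mat)
  next
    case 3
    then have "proj_dim Q v u = 0" using v by (simp add: proj_dim_eq)
    then show ?thesis
      using yw yu Xuw rmap_proj_rep_carrier[OF v, of "(u, w)", where 'a = 'a]
      by (intro mat_eq_if_no_rows_or_cols[of _ "rdim X w" 0]) auto
  qed
qed

lemma yoneda_hom_comp:
  assumes X: "is_rep Q X" and Y: "is_rep Q Y" and g: "is_hom Q X Y g"
    and v: "v \<in> fst Q" and x: "x \<in> carrier_vec (rdim X v)"
  shows "comp_hom g (yoneda_hom Q v X x) = yoneda_hom Q v Y (g v *\<^sub>v x)"
proof
  fix w
  have gv: "g v \<in> carrier_mat (rdim Y v) (rdim X v)" and gw: "g w \<in> carrier_mat (rdim Y w) (rdim X w)"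
    using hom_carrier[OF g] by auto
  consider "w = v" | "w \<noteq> v" "(v, w) \<in> snd Q" | "w \<noteq> v" "(v, w) \<notin> snd Q" by blast
  then show "comp_hom g (yoneda_hom Q v X x) w = yoneda_hom Q v Y (g v *\<^sub>v x) w"
  proof cases
    case 1
    then show ?thesis using gv x by (simp add: comp_hom_def yoneda_hom_def mult_mat_of_cols_single)
  next
    case 2
    have Xvw: "rmap X (v, w) \<in> carrier_mat (rdim X w) (rdim X v)"
      and Yvw: "rmap Y (v, w) \<in> carrier_mat (rdim Y w) (rdim Y v)"
      using rep_carrier[OF X, of "(v, w)"] rep_carrier[OF Y, of "(v, w)"] by auto
    have "g w *\<^sub>v (rmap X (v, w) *\<^sub>v x) = (g w * rmap X (v, w)) *\<^sub>v x"
      using gw Xvw x by simp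
    also have "\<dots> = (rmap Y (v, w) * g v) *\<^sub>v x"
      using hom_commutes[OF g 2(2)] by simp
    also have "\<dots> = rmap Y (v, w) *\<^sub>v (g v *\<^sub>v x)"
      using Yvw gv x by simp
    finally show ?thesis
      using 2 gw Xvw x by (simp add: comp_hom_def yoneda_hom_def mult_mat_of_cols_single)
  qed (simp add: comp_hom_def yoneda_hom_def right_mult_zero_mat[OF gw])
qed

lemma yoneda_hom_generator:
  assumes v: "v \<in> fst Q"
  shows "yoneda_hom Q v (proj_rep Q v) (unit_vec 1 0) w = 1\<^sub>m (proj_dim Q v w)"
  using v by (auto simp: yoneda_hom_def proj_rep_def proj_dim_eq mat_of_cols_index intro!: eq_matI)

lemma hom_from_proj_rep_eq_yoneda_hom:
  assumes X: "is_rep Q X" and v: "v \<in> fst Q" and h: "is_hom Q (proj_rep Q v) X h"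
  shows "h = yoneda_hom Q v X (h v *\<^sub>v unit_vec 1 0)"
proof
  fix w
  have "h w = comp_hom h (yoneda_hom Q v (proj_rep Q v :: 'a rep) (unit_vec 1 0)) w"
    using hom_carrier[OF h, of w] yoneda_hom_generator[OF v, of w, where 'a = 'a]
    by (simp add: comp_hom_def rdim_proj_rep)
  also have "\<dots> = yoneda_hom Q v X (h v *\<^sub>v unit_vec 1 0) w"
    using yoneda_hom_comp[OF is_rep_proj_rep[OF v] X h v] v by (simp add: rdim_proj_rep proj_dim_eq)
  finally show "h w = yoneda_hom Q v X (h v *\<^sub>v unit_vec 1 0) w" .
qed

lemma yoneda_hom_zero_vec:
  assumes X: "is_rep Q X" and v: "v \<in> fst Q"
  shows "yoneda_hom Q v X (0\<^sub>v (rdim X v)) w = 0\<^sub>m (rdim X w) (proj_dim Q v w)"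
  using v rep_carrier[OF X, of "(v, w)"]
  by (auto simp: yoneda_hom_def proj_dim_eq mat_of_cols_single_zero mult_mat_vec_zero)

lemma hom_zero_proj_rep_iff:
  assumes X: "is_rep Q X" and v: "v \<in> fst Q"
  shows "hom_zero Q (proj_rep Q v) X \<longleftrightarrow> rdim X v = 0"
proof
  let ?x = "unit_vec (rdim X v) 0 :: 'a vec"
  assume "hom_zero Q (proj_rep Q v) X"
  moreover have "yoneda_hom Q v X ?x \<in> Hom Q (proj_rep Q v) X"
    using is_hom_yoneda_hom[OF X v] by (simp add: Hom_def)
  ultimately have "yoneda_hom Q v X ?x v = 0\<^sub>m (rdim X v) (proj_dim Q v v)"
    using v unfolding hom_zero_def rdim_proj_rep by blast
  then have "mat_of_cols (rdim X v) [?x] = 0\<^sub>m (rdim X v) 1"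
    using v by (simp add: yoneda_hom_def proj_dim_eq)
  then have "rdim X v > 0 \<Longrightarrow> mat_of_cols (rdim X v) [?x] $$ (0, 0) = 0"
    by simp
  then show "rdim X v = 0"
    by (auto simp: mat_of_cols_index)
next
  assume X0: "rdim X v = 0"
  show "hom_zero Q (proj_rep Q v) X"
    unfolding hom_zero_def
  proof (intro ballI)
    fix h w assume "h \<in> Hom Q (proj_rep Q v) X"
    then have h: "is_hom Q (proj_rep Q v) X h" by (simp add: Hom_def)
    then have "h = yoneda_hom Q v X (h v *\<^sub>v unit_vec 1 0)"
      by (rule hom_from_proj_rep_eq_yoneda_hom[OF X v])
    moreover have "h v *\<^sub>v unit_vec 1 0 = 0\<^sub>v (rdim X v)"
      using hom_carrier[OF h, of v] X0 by (intro eq_vecI) auto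
    ultimately show "h w = 0\<^sub>m (rdim X w) (rdim (proj_rep Q v) w)"
      using yoneda_hom_zero_vec[OF X v] by (simp add: rdim_proj_rep)
  qed
qed

text \<open>A preimage of the generator under p gives, via Yoneda, a splitting s of p; essentiality
  of p forces s to be surjective, so p is injective.\<close>

lemma essential_epi_onto_proj_rep_injective:
  assumes P0: "is_rep Q P0" and v: "v \<in> fst Q" and p: "essential_epi Q P0 (proj_rep Q v) p"
    and w: "w \<in> fst Q" and y: "y \<in> carrier_vec (rdim P0 w)"
    and py: "p w *\<^sub>v y = 0\<^sub>v (proj_dim Q v w)"
  shows "y = 0\<^sub>v (rdim P0 w)"
proof -
  have p_hom: "is_hom Q P0 (proj_rep Q v) p" and p_surj: "surj_hom Q P0 (proj_rep Q v) p"
    using p unfolding essential_epi_def by auto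
  have "unit_vec 1 0 \<in> img (p v)"
    using p_surj v unfolding surj_hom_def by (simp add: rdim_proj_rep proj_dim_eq)
  then obtain x where x: "x \<in> carrier_vec (rdim P0 v)" and px: "p v *\<^sub>v x = unit_vec 1 0"
    unfolding img_def using hom_carrier[OF p_hom, of v] by auto
  define s where "s = yoneda_hom Q v P0 x"
  have s_hom: "is_hom Q (proj_rep Q v) P0 s"
    unfolding s_def by (rule is_hom_yoneda_hom[OF P0 v x])
  have ps: "comp_hom p s u = 1\<^sub>m (proj_dim Q v u)" for u
    using yoneda_hom_comp[OF P0 is_rep_proj_rep[OF v] p_hom v x] yoneda_hom_generator[OF v]
    unfolding s_def px by simp
  have "surj_hom Q (proj_rep Q v) (proj_rep Q v) (comp_hom p s)"
    unfolding surj_hom_def using ps by (simp add: img_one_mat rdim_proj_rep)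
  then have "surj_hom Q (proj_rep Q v) P0 s"
    using p s_hom is_rep_proj_rep[OF v] unfolding essential_epi_def by blast
  then have "y \<in> img (s w)"
    using w y unfolding surj_hom_def by simp
  moreover have sw: "s w \<in> carrier_mat (rdim P0 w) (proj_dim Q v w)"
    using hom_carrier[OF s_hom, of w] by (simp add: rdim_proj_rep)
  ultimately obtain z where z: "z \<in> carrier_vec (proj_dim Q v w)" and yz: "y = s w *\<^sub>v z"
    unfolding img_def by auto
  have pw: "p w \<in> carrier_mat (proj_dim Q v w) (rdim P0 w)"
    using hom_carrier[OF p_hom, of w] by (simp add: rdim_proj_rep)
  have "z = (p w * s w) *\<^sub>v z"
    using ps[of w] z by (simp add: comp_hom_def)
  also have "\<dots> = p w *\<^sub>v y"
    using yz sw pw z by simp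
  finally have "z = 0\<^sub>v (proj_dim Q v w)"
    using py by simp
  then show ?thesis
    using yz sw by (simp add: mult_mat_vec_zero)
qed

lemma min_proj_pres_of_proj_rep_P1_zero:
  assumes v: "v \<in> fst Q" and pres: "min_proj_pres Q (proj_rep Q v) P0 P1 p f"
  shows "rdim P1 w = 0"
proof -
  have P0: "is_rep Q P0" and P1: "is_rep Q P1"
    using pres unfolding min_proj_pres_def projective_def by auto
  have p: "essential_epi Q P0 (proj_rep Q v) p" and f: "is_hom Q P1 P0 f"
    and pf: "\<And>u. u \<in> fst Q \<Longrightarrow> p u * f u = 0\<^sub>m (proj_dim Q v u) (rdim P1 u)"
    using pres unfolding min_proj_pres_def by (auto simp: rdim_proj_rep)
  have p_hom: "is_hom Q P0 (proj_rep Q v) p"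
    using p unfolding essential_epi_def by auto
  have img_f: "img (f u) = {0\<^sub>v (rdim P0 u)}" if u: "u \<in> fst Q" for u
  proof (rule img_eq_zero_vec_if_mult_zero)
    show fu: "f u \<in> carrier_mat (rdim P0 u) (rdim P1 u)"
      using hom_carrier[OF f] .
    fix z :: "'a vec" assume z: "z \<in> carrier_vec (rdim P1 u)"
    have "p u *\<^sub>v (f u *\<^sub>v z) = (p u * f u) *\<^sub>v z"
      using hom_carrier[OF p_hom, of u] fu z by (simp add: rdim_proj_rep)
    also have "\<dots> = 0\<^sub>v (proj_dim Q v u)"
      using pf[OF u] z by (simp add: zero_mult_mat_vec)
    finally show "f u *\<^sub>v z = 0\<^sub>v (rdim P0 u)"
      using essential_epi_onto_proj_rep_injective[OF P0 v p u] fu z by simp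
  qed
  have "surj_hom Q zero_rep P1 (\<lambda>u. 0\<^sub>m (rdim P1 u) 0)"
  proof -
    have "f u * 0\<^sub>m (rdim P1 u) 0 = 0\<^sub>m (rdim P0 u) 0" for u
      using hom_carrier[OF f, of u] by (rule right_mult_zero_mat)
    then have "\<forall>u \<in> fst Q. img (f u * 0\<^sub>m (rdim P1 u) 0) = img (f u)"
      using img_f by (simp add: img_no_cols[OF zero_carrier_mat])
    moreover have "is_hom Q zero_rep P1 (\<lambda>u. 0\<^sub>m (rdim P1 u) 0)"
      using is_hom_zero[OF is_rep_zero_rep P1] by (simp add: zero_rep_def)
    ultimately show ?thesis
      using pres is_rep_zero_rep unfolding min_proj_pres_def by blast
  qed
  then show ?thesis
    using rep_outside[OF P1, of w] carrier_vec_singleton_imp_dim_0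
    unfolding surj_hom_def by (metis img_no_cols zero_carrier_mat)
qed

lemma tau_proj_rep_zero:
  assumes v: "v \<in> fst Q" and tau: "is_tau Q (proj_rep Q v) N"
  shows "rdim N w = 0"
proof (cases "w \<in> fst Q")
  case False
  moreover have "is_rep Q N"
    using tau unfolding is_tau_def by (rule conjunct1)
  ultimately show ?thesis by (simp add: rep_outside)
next
  case w: True
  obtain P0 P1 p f and g :: "nat \<Rightarrow> (nat \<Rightarrow> 'a mat) \<Rightarrow> 'a vec" where
    pres: "min_proj_pres Q (proj_rep Q v) P0 P1 p f"
    and g_onto: "\<forall>\<xi> \<in> carrier_vec (rdim N w). \<exists>y \<in> Hom Q P1 (proj_rep Q w). g w y = \<xi>"
    and g_kernel: "\<forall>y \<in> Hom Q P1 (proj_rep Q w). g w y = 0\<^sub>v (rdim N w) \<longleftrightarrow>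
        (\<exists>h \<in> Hom Q P0 (proj_rep Q w). y = comp_hom h f)"
    using tau w unfolding is_tau_def by fast
  have P0: "is_rep Q P0" and f: "is_hom Q P1 P0 f"
    using pres unfolding min_proj_pres_def projective_def by auto
  have P1_zero: "rdim P1 u = 0" for u
    using min_proj_pres_of_proj_rep_P1_zero[OF v pres] .
  let ?zero = "\<lambda>u. 0\<^sub>m (proj_dim Q w u) (rdim P0 u)"
  have zero_hom: "?zero \<in> Hom Q P0 (proj_rep Q w)"
    using is_hom_zero[OF P0 is_rep_proj_rep[OF w]] by (simp add: Hom_def rdim_proj_rep)
  have "y = comp_hom ?zero f" if "y \<in> Hom Q P1 (proj_rep Q w)" for y
  proof
    fix u
    show "y u = comp_hom ?zero f u"
      using that hom_carrier[of Q P1 "proj_rep Q w" y u] hom_carrier[OF f, of u] P1_zero[of u]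
      by (intro mat_eq_if_no_rows_or_cols[of _ "proj_dim Q w u" 0])
        (auto simp: Hom_def comp_hom_def rdim_proj_rep)
  qed
  then have "g w y = 0\<^sub>v (rdim N w)" if "y \<in> Hom Q P1 (proj_rep Q w)" for y
    using that g_kernel zero_hom by blast
  then have "carrier_vec (rdim N w) = {0\<^sub>v (rdim N w) :: 'a vec}"
    using g_onto by fastforce
  then show ?thesis
    by (rule carrier_vec_singleton_imp_dim_0)
qed

lemma tau_perp_proj_rep:
  assumes v: "v \<in> fst Q"
  shows "tau_perp Q (proj_rep Q v) = {X. is_rep Q X \<and> rdim X v = 0}"
proof -
  have "hom_zero Q X N" if "is_tau Q (proj_rep Q v) N" for X N :: "'a rep"
    unfolding hom_zero_def Hom_def
  proof (intro ballI, unfold mem_Collect_eq)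
    fix h w assume "is_hom Q X N h"
    then show "h w = 0\<^sub>m (rdim N w) (rdim X w)"
      using tau_proj_rep_zero[OF v that, of w] hom_carrier[of Q X N h w]
      by (intro mat_eq_if_no_rows_or_cols[of _ "rdim N w" "rdim X w"]) auto
  qed
  then have "X \<in> tau_perp Q (proj_rep Q v) \<longleftrightarrow> is_rep Q X \<and> rdim X v = 0" for X :: "'a rep"
    using hom_zero_proj_rep_iff[OF _ v, of X] unfolding tau_perp_def by blast
  then show ?thesis by blast
qed

end

section \<open>Deleting a vertex\<close>

definition restrict_rep :: "quiver \<Rightarrow> (nat \<Rightarrow> nat) \<Rightarrow> 'a::field rep \<Rightarrow> 'a rep" where
  "restrict_rep Q' \<sigma> X =
     (let d = \<lambda>k. if k \<in> fst Q' then rdim X (\<sigma> k) else 0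
      in \<lparr>rdim = d, rmap = \<lambda>e. if e \<in> snd Q' then rmap X (\<sigma> (fst e), \<sigma> (snd e))
                              else 0\<^sub>m (d (snd e)) (d (fst e))\<rparr>)"

definition restrict_hom :: "quiver \<Rightarrow> (nat \<Rightarrow> nat) \<Rightarrow> (nat \<Rightarrow> 'a::field mat) \<Rightarrow> nat \<Rightarrow> 'a mat" where
  "restrict_hom Q' \<sigma> h k = (if k \<in> fst Q' then h (\<sigma> k) else 0\<^sub>m 0 0)"

definition extend_rep :: "quiver \<Rightarrow> nat \<Rightarrow> (nat \<Rightarrow> nat) \<Rightarrow> 'a::field rep \<Rightarrow> 'a rep" where
  "extend_rep Q i \<rho> Y =
     (let d = \<lambda>v. if v \<in> fst Q \<and> v \<noteq> i then rdim Y (\<rho> v) else 0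
      in \<lparr>rdim = d, rmap = \<lambda>e. if e \<in> snd Q \<and> fst e \<noteq> i \<and> snd e \<noteq> i
                              then rmap Y (\<rho> (fst e), \<rho> (snd e))
                              else 0\<^sub>m (d (snd e)) (d (fst e))\<rparr>)"

definition extend_hom ::
  "quiver \<Rightarrow> nat \<Rightarrow> (nat \<Rightarrow> nat) \<Rightarrow> 'a::field rep \<Rightarrow> 'a rep \<Rightarrow> (nat \<Rightarrow> 'a mat) \<Rightarrow> nat \<Rightarrow> 'a mat"
where
  "extend_hom Q i \<rho> X Y h v = (if v \<in> fst Q \<and> v \<noteq> i then h (\<rho> v) else 0\<^sub>m (rdim Y v) (rdim X v))"

lemma rdim_restrict_rep:
  "rdim (restrict_rep Q' \<sigma> X) k = (if k \<in> fst Q' then rdim X (\<sigma> k) else 0)"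
  by (simp add: restrict_rep_def)

lemma rmap_restrict_rep:
  "rmap (restrict_rep Q' \<sigma> X) (k, l) =
     (if (k, l) \<in> snd Q' then rmap X (\<sigma> k, \<sigma> l)
      else 0\<^sub>m (rdim (restrict_rep Q' \<sigma> X) l) (rdim (restrict_rep Q' \<sigma> X) k))"
  by (simp add: restrict_rep_def)

lemma rdim_extend_rep:
  "rdim (extend_rep Q i \<rho> Y) v = (if v \<in> fst Q \<and> v \<noteq> i then rdim Y (\<rho> v) else 0)"
  by (simp add: extend_rep_def)

lemma rmap_extend_rep:
  "rmap (extend_rep Q i \<rho> Y) (u, w) =
     (if (u, w) \<in> snd Q \<and> u \<noteq> i \<and> w \<noteq> i then rmap Y (\<rho> u, \<rho> w)
      else 0\<^sub>m (rdim (extend_rep Q i \<rho> Y) w) (rdim (extend_rep Q i \<rho> Y) u))"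
  by (simp add: extend_rep_def)

lemma restrict_hom_comp:
  "restrict_hom Q' \<sigma> (comp_hom g h) = comp_hom (restrict_hom Q' \<sigma> g) (restrict_hom Q' \<sigma> h)"
  by (rule ext) (simp add: restrict_hom_def comp_hom_def)

locale vertex_deletion = Q: wf_quiver Q + Q': wf_quiver Q' for Q Q' :: quiver +
  fixes i :: nat and \<sigma> \<rho> :: "nat \<Rightarrow> nat"
  assumes \<sigma>_vertex: "k \<in> fst Q' \<Longrightarrow> \<sigma> k \<in> fst Q \<and> \<sigma> k \<noteq> i"
    and \<rho>_vertex: "v \<in> fst Q \<Longrightarrow> v \<noteq> i \<Longrightarrow> \<rho> v \<in> fst Q'"
    and \<rho>_\<sigma>: "k \<in> fst Q' \<Longrightarrow> \<rho> (\<sigma> k) = k"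
    and \<sigma>_\<rho>: "v \<in> fst Q \<Longrightarrow> v \<noteq> i \<Longrightarrow> \<sigma> (\<rho> v) = v"
    and arrow_iff: "k \<in> fst Q' \<Longrightarrow> l \<in> fst Q' \<Longrightarrow> (k, l) \<in> snd Q' \<longleftrightarrow> (\<sigma> k, \<sigma> l) \<in> snd Q"
begin

lemma \<rho>_arrow: "(u, w) \<in> snd Q \<Longrightarrow> u \<noteq> i \<Longrightarrow> w \<noteq> i \<Longrightarrow> (\<rho> u, \<rho> w) \<in> snd Q'"
  using Q.arrow_vertices \<rho>_vertex \<sigma>_\<rho> arrow_iff by metis

lemma \<sigma>_arrow: "(k, l) \<in> snd Q' \<Longrightarrow> (\<sigma> k, \<sigma> l) \<in> snd Q"
  using Q'.arrow_vertices arrow_iff by blast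

lemma is_rep_restrict_rep:
  assumes X: "is_rep Q X"
  shows "is_rep Q' (restrict_rep Q' \<sigma> X)"
  unfolding is_rep_def
proof (intro conjI allI ballI impI)
  fix e assume "e \<in> snd Q'"
  then show "rmap (restrict_rep Q' \<sigma> X) e \<in>
      carrier_mat (rdim (restrict_rep Q' \<sigma> X) (snd e)) (rdim (restrict_rep Q' \<sigma> X) (fst e))"
    using rep_carrier[OF X] Q'.arrow_vertices
    by (cases e) (auto simp: rmap_restrict_rep rdim_restrict_rep)
next
  fix k l m assume "(k, l) \<in> snd Q'" "(l, m) \<in> snd Q'"
  then show "rmap (restrict_rep Q' \<sigma> X) (l, m) * rmap (restrict_rep Q' \<sigma> X) (k, l) =
      0\<^sub>m (rdim (restrict_rep Q' \<sigma> X) m) (rdim (restrict_rep Q' \<sigma> X) k)"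
    using rep_radical_square_zero[OF X \<sigma>_arrow \<sigma>_arrow] Q'.arrow_vertices
    by (auto simp: rmap_restrict_rep rdim_restrict_rep)
qed (auto simp: rdim_restrict_rep restrict_rep_def)

lemma is_hom_restrict_hom:
  assumes h: "is_hom Q X Y h"
  shows "is_hom Q' (restrict_rep Q' \<sigma> X) (restrict_rep Q' \<sigma> Y) (restrict_hom Q' \<sigma> h)"
proof (rule is_homI)
  fix k l assume "(k, l) \<in> snd Q'"
  then show "restrict_hom Q' \<sigma> h l * rmap (restrict_rep Q' \<sigma> X) (k, l) =
      rmap (restrict_rep Q' \<sigma> Y) (k, l) * restrict_hom Q' \<sigma> h k"
    using hom_commutes[OF h \<sigma>_arrow] Q'.arrow_vertices
    by (auto simp: restrict_hom_def rmap_restrict_rep)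
qed (use hom_carrier[OF h] in \<open>auto simp: restrict_hom_def rdim_restrict_rep\<close>)

lemma restrict_hom_id: "restrict_hom Q' \<sigma> (id_hom Q X) = id_hom Q' (restrict_rep Q' \<sigma> X)"
  by (rule ext) (simp add: restrict_hom_def id_hom_def rdim_restrict_rep \<sigma>_vertex)

lemma inj_on_restrict_hom:
  assumes X0: "rdim X i = 0" and Y0: "rdim Y i = 0"
  shows "inj_on (restrict_hom Q' \<sigma>) (Hom Q X Y)"
proof (rule inj_onI)
  fix h h' assume "h \<in> Hom Q X Y" "h' \<in> Hom Q X Y"
    and eq: "restrict_hom Q' \<sigma> h = restrict_hom Q' \<sigma> h'"
  then have h: "is_hom Q X Y h" and h': "is_hom Q X Y h'" by (auto simp: Hom_def)
  show "h = h'"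
  proof
    fix v
    consider "v \<in> fst Q" "v \<noteq> i" | "v = i" | "v \<notin> fst Q" by blast
    then show "h v = h' v"
    proof cases
      case 1
      then show ?thesis
        using fun_cong[OF eq, of "\<rho> v"] \<rho>_vertex \<sigma>_\<rho> by (simp add: restrict_hom_def)
    next
      case 2
      then show ?thesis
        using hom_carrier[OF h, of v] hom_carrier[OF h', of v] X0 Y0
        by (intro mat_eq_if_no_rows_or_cols[of _ 0 0]) auto
    next
      case 3
      then show ?thesis using hom_outside[OF h] hom_outside[OF h'] by simp
    qed
  qed
qed

lemma is_hom_extend_hom:
  assumes X: "is_rep Q X" and Y: "is_rep Q Y" and X0: "rdim X i = 0" and Y0: "rdim Y i = 0"
    and h': "is_hom Q' (restrict_rep Q' \<sigma> X) (restrict_rep Q' \<sigma> Y) h'"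
  shows "is_hom Q X Y (extend_hom Q i \<rho> X Y h')"
proof (rule is_homI)
  let ?h = "extend_hom Q i \<rho> X Y h'"
  show h_carrier: "?h v \<in> carrier_mat (rdim Y v) (rdim X v)" for v
    using hom_carrier[OF h', of "\<rho> v"] \<rho>_vertex \<sigma>_\<rho>
    by (cases "v \<in> fst Q \<and> v \<noteq> i") (auto simp: extend_hom_def rdim_restrict_rep)
  fix u w assume uw: "(u, w) \<in> snd Q"
  have Xuw: "rmap X (u, w) \<in> carrier_mat (rdim X w) (rdim X u)"
    and Yuw: "rmap Y (u, w) \<in> carrier_mat (rdim Y w) (rdim Y u)"
    using rep_carrier[OF X, of "(u, w)"] rep_carrier[OF Y, of "(u, w)"] by auto
  consider "u \<noteq> i" "w \<noteq> i" | "u = i" | "w = i" by blast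
  then show "?h w * rmap X (u, w) = rmap Y (u, w) * ?h u"
  proof cases
    case 1
    then show ?thesis
      using hom_commutes[OF h' \<rho>_arrow[OF uw 1]] Q.arrow_vertices[OF uw] \<sigma>_\<rho>
      by (simp add: extend_hom_def rmap_restrict_rep \<rho>_arrow[OF uw 1])
  next
    case 2
    then show ?thesis using h_carrier[of w] h_carrier[of u] Xuw Yuw X0
      by (intro mat_eq_if_no_rows_or_cols[of _ "rdim Y w" 0]) auto
  next
    case 3
    then show ?thesis using h_carrier[of w] h_carrier[of u] Xuw Yuw Y0
      by (intro mat_eq_if_no_rows_or_cols[of _ 0 "rdim X u"]) auto
  qed
qed (simp add: extend_hom_def)

lemma restrict_extend_hom:
  assumes h': "is_hom Q' (restrict_rep Q' \<sigma> X) (restrict_rep Q' \<sigma> Y) h'"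
  shows "restrict_hom Q' \<sigma> (extend_hom Q i \<rho> X Y h') = h'"
proof
  fix k show "restrict_hom Q' \<sigma> (extend_hom Q i \<rho> X Y h') k = h' k"
    using hom_outside[OF h', of k] \<sigma>_vertex \<rho>_\<sigma>
    by (auto simp: restrict_hom_def extend_hom_def rdim_restrict_rep)
qed

lemma restrict_hom_image_Hom:
  assumes X: "is_rep Q X" and Y: "is_rep Q Y" and X0: "rdim X i = 0" and Y0: "rdim Y i = 0"
  shows "restrict_hom Q' \<sigma> ` Hom Q X Y = Hom Q' (restrict_rep Q' \<sigma> X) (restrict_rep Q' \<sigma> Y)"
proof
  show "restrict_hom Q' \<sigma> ` Hom Q X Y \<subseteq> Hom Q' (restrict_rep Q' \<sigma> X) (restrict_rep Q' \<sigma> Y)"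
    using is_hom_restrict_hom by (auto simp: Hom_def)
  show "Hom Q' (restrict_rep Q' \<sigma> X) (restrict_rep Q' \<sigma> Y) \<subseteq> restrict_hom Q' \<sigma> ` Hom Q X Y"
  proof
    fix h' assume "h' \<in> Hom Q' (restrict_rep Q' \<sigma> X) (restrict_rep Q' \<sigma> Y)"
    then have h': "is_hom Q' (restrict_rep Q' \<sigma> X) (restrict_rep Q' \<sigma> Y) h'"
      by (simp add: Hom_def)
    have "extend_hom Q i \<rho> X Y h' \<in> Hom Q X Y"
      using is_hom_extend_hom[OF X Y X0 Y0 h'] by (simp add: Hom_def)
    then show "h' \<in> restrict_hom Q' \<sigma> ` Hom Q X Y"
      using restrict_extend_hom[OF h'] by force
  qed
qed

lemma rmap_extend_rep_carrier:
  assumes Y: "is_rep Q' Y"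
  shows "rmap (extend_rep Q i \<rho> Y) e \<in>
    carrier_mat (rdim (extend_rep Q i \<rho> Y) (snd e)) (rdim (extend_rep Q i \<rho> Y) (fst e))"
  using rep_carrier[OF Y] Q.arrow_vertices by (cases e) (auto simp: rmap_extend_rep rdim_extend_rep)

lemma is_rep_extend_rep:
  assumes Y: "is_rep Q' Y"
  shows "is_rep Q (extend_rep Q i \<rho> Y)"
  unfolding is_rep_def
proof (intro conjI allI ballI impI)
  fix u w x assume uw: "(u, w) \<in> snd Q" and wx: "(w, x) \<in> snd Q"
  let ?X = "extend_rep Q i \<rho> Y"
  consider "u \<noteq> i" "w \<noteq> i" "x \<noteq> i" | "u = i \<or> w = i" | "x = i" by blast
  then show "rmap ?X (w, x) * rmap ?X (u, w) = 0\<^sub>m (rdim ?X x) (rdim ?X u)"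
  proof cases
    case 1
    then show ?thesis
      using rep_radical_square_zero[OF Y \<rho>_arrow[OF uw] \<rho>_arrow[OF wx]] uw wx Q.arrow_vertices
      by (auto simp: rmap_extend_rep rdim_extend_rep)
  next
    case 2
    then have "rmap ?X (u, w) = 0\<^sub>m (rdim ?X w) (rdim ?X u)"
      by (auto simp: rmap_extend_rep)
    then show ?thesis
      using right_mult_zero_mat[OF rmap_extend_rep_carrier[OF Y, of "(w, x)"]] by simp
  next
    case 3
    then have "rmap ?X (w, x) = 0\<^sub>m (rdim ?X x) (rdim ?X w)"
      by (auto simp: rmap_extend_rep)
    then show ?thesis
      using left_mult_zero_mat[OF rmap_extend_rep_carrier[OF Y, of "(u, w)"]] by simp
  qed
next
  fix e show "rmap (extend_rep Q i \<rho> Y) e \<in>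
      carrier_mat (rdim (extend_rep Q i \<rho> Y) (snd e)) (rdim (extend_rep Q i \<rho> Y) (fst e))"
    by (rule rmap_extend_rep_carrier[OF Y])
qed (auto simp: rdim_extend_rep extend_rep_def)

lemma restrict_extend_rep:
  assumes Y: "is_rep Q' Y"
  shows "restrict_rep Q' \<sigma> (extend_rep Q i \<rho> Y) = Y"
proof (rule rep.equality)
  show dims: "rdim (restrict_rep Q' \<sigma> (extend_rep Q i \<rho> Y)) = rdim Y"
    using \<sigma>_vertex \<rho>_\<sigma> rep_outside[OF Y] by (auto simp: rdim_restrict_rep rdim_extend_rep)
  show "rmap (restrict_rep Q' \<sigma> (extend_rep Q i \<rho> Y)) = rmap Y"
  proof
    fix e :: "nat \<times> nat"
    obtain k l where e: "e = (k, l)" by (cases e)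
    show "rmap (restrict_rep Q' \<sigma> (extend_rep Q i \<rho> Y)) e = rmap Y e"
    proof (cases "e \<in> snd Q'")
      case True
      then show ?thesis
        using e \<sigma>_arrow \<sigma>_vertex \<rho>_\<sigma> Q'.arrow_vertices
        by (auto simp: rmap_restrict_rep rmap_extend_rep)
    next
      case False
      then show ?thesis
        using e dims Y unfolding is_rep_def by (simp add: rmap_restrict_rep)
    qed
  qed
qed simp

lemma cat_equivalent_vanishing_at_deleted_vertex:
  "cat_equivalent Q {X :: 'a::field rep. is_rep Q X \<and> rdim X i = 0} Q'"
  unfolding cat_equivalent_def
proof (intro exI[of _ "restrict_rep Q' \<sigma>"] exI[of _ "\<lambda>_ _. restrict_hom Q' \<sigma>"] conjI ballI allI impI)
  fix Y :: "'a rep" assume Y: "is_rep Q' Y"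
  have "extend_rep Q i \<rho> Y \<in> {X. is_rep Q X \<and> rdim X i = 0}"
    using is_rep_extend_rep[OF Y] by (simp add: rdim_extend_rep)
  then show "\<exists>X \<in> {X. is_rep Q X \<and> rdim X i = 0}. isomorphic Q' (restrict_rep Q' \<sigma> X) Y"
    using Q'.isomorphic_refl[OF Y] restrict_extend_rep[OF Y] by metis
next
  fix X Y :: "'a rep" assume "X \<in> {X. is_rep Q X \<and> rdim X i = 0}" "Y \<in> {X. is_rep Q X \<and> rdim X i = 0}"
  then show "inj_on (restrict_hom Q' \<sigma>) (Hom Q X Y)"
    by (simp add: inj_on_restrict_hom)
next
  fix X Y :: "'a rep" assume "X \<in> {X. is_rep Q X \<and> rdim X i = 0}" "Y \<in> {X. is_rep Q X \<and> rdim X i = 0}"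
  then show "restrict_hom Q' \<sigma> ` Hom Q X Y = Hom Q' (restrict_rep Q' \<sigma> X) (restrict_rep Q' \<sigma> Y)"
    by (simp add: restrict_hom_image_Hom)
qed (auto simp: Hom_def is_rep_restrict_rep is_hom_restrict_hom restrict_hom_id restrict_hom_comp)

end

section \<open>The cyclic quiver\<close>

lemma mem_snd_Lambda2: "(u, w) \<in> snd (Lambda2 n) \<longleftrightarrow> u < n \<and> w = Suc u mod n"
  by (auto simp: Lambda2_def)

lemma mem_snd_Gamma2: "(k, l) \<in> snd (Gamma2 m) \<longleftrightarrow> l = Suc k \<and> Suc k < m"
  by (auto simp: Gamma2_def)

lemma loopless_quiver_Lambda2:
  assumes "2 \<le> n"
  shows "loopless_quiver (Lambda2 n)"
proof
  fix u w assume "(u, w) \<in> snd (Lambda2 n)"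
  then show "u \<in> fst (Lambda2 n) \<and> w \<in> fst (Lambda2 n)"
    by (auto simp: mem_snd_Lambda2 Lambda2_def)
next
  fix u show "(u, u) \<notin> snd (Lambda2 n)"
  proof
    assume "(u, u) \<in> snd (Lambda2 n)"
    then have u: "u < n" and loop: "Suc u mod n = u" by (simp_all add: mem_snd_Lambda2)
    show False
    proof (cases "Suc u < n")
      case True
      then show False using loop by simp
    next
      case False
      then have "Suc u = n" using u by simp
      then show False using loop assms by auto
    qed
  qed
qed

lemma wf_quiver_Gamma2: "wf_quiver (Gamma2 m)"
  by unfold_locales (auto simp: Gamma2_def)

lemma rotate_mod_inverse:
  fixes k n a b :: nat
  assumes "k < n" and "a + b = n"
  shows "((k + a) mod n + b) mod n = k"
proof -
  have "((k + a) mod n + b) mod n = (k + (a + b)) mod n"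
    by (simp add: mod_add_left_eq add.assoc)
  then show ?thesis using assms by simp
qed

lemma vertex_deletion_Lambda2:
  assumes n: "2 \<le> n" and i: "i < n"
  shows "vertex_deletion (Lambda2 n) (Gamma2 (n - 1)) i
           (\<lambda>k. (k + Suc i) mod n) (\<lambda>v. (v + (n - Suc i)) mod n)"
proof -
  let ?\<sigma> = "\<lambda>k. (k + Suc i) mod n" and ?\<rho> = "\<lambda>v. (v + (n - Suc i)) mod n"
  have \<rho>_\<sigma>: "?\<rho> (?\<sigma> k) = k" if "k < n" for k
    using that i by (intro rotate_mod_inverse) auto
  have \<sigma>_\<rho>: "?\<sigma> (?\<rho> v) = v" if "v < n" for v
    using that i by (intro rotate_mod_inverse) auto
  have \<rho>_i: "?\<rho> i = n - 1"
    using i by simp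
  have \<sigma>_last: "?\<sigma> (n - 1) = i"
    using i n by (simp add: le_mod_geq)
  show ?thesis
  proof (intro_locales)
    show "wf_quiver (Lambda2 n)"
      using loopless_quiver_Lambda2[OF n] by (simp add: loopless_quiver_def)
    show "wf_quiver (Gamma2 (n - 1))"
      by (rule wf_quiver_Gamma2)
    show "vertex_deletion_axioms (Lambda2 n) (Gamma2 (n - 1)) i ?\<sigma> ?\<rho>"
    proof
      fix k assume "k \<in> fst (Gamma2 (n - 1))"
      then have k: "k < n - 1" by (simp add: Gamma2_def)
      have "?\<sigma> k \<noteq> i"
      proof
        assume "?\<sigma> k = i"
        have "k = ?\<rho> (?\<sigma> k)" using \<rho>_\<sigma>[of k] k by simp
        also have "\<dots> = n - 1" using \<open>?\<sigma> k = i\<close> \<rho>_i by simp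
        finally show False using k by simp
      qed
      then show "?\<sigma> k \<in> fst (Lambda2 n) \<and> ?\<sigma> k \<noteq> i"
        using n by (simp add: Lambda2_def)
      show "?\<rho> (?\<sigma> k) = k" using k \<rho>_\<sigma> by simp
    next
      fix v assume "v \<in> fst (Lambda2 n)" "v \<noteq> i"
      then have v: "v < n" "v \<noteq> i" by (auto simp: Lambda2_def)
      have "?\<rho> v \<noteq> n - 1"
      proof
        assume "?\<rho> v = n - 1"
        then have "v = ?\<sigma> (n - 1)" using \<sigma>_\<rho>[of v] v by simp
        then show False using \<sigma>_last v by simp
      qed
      moreover have "?\<rho> v < n" using n by simp
      ultimately show "?\<rho> v \<in> fst (Gamma2 (n - 1))"
        by (simp add: Gamma2_def)
      show "?\<sigma> (?\<rho> v) = v" using v \<sigma>_\<rho> by simp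
    next
      fix k l assume "k \<in> fst (Gamma2 (n - 1))" "l \<in> fst (Gamma2 (n - 1))"
      then have k: "k < n - 1" and l: "l < n - 1" by (auto simp: Gamma2_def)
      have "l = Suc k" if "?\<sigma> l = ?\<sigma> (Suc k)"
      proof -
        have "l = ?\<rho> (?\<sigma> l)" using \<rho>_\<sigma>[of l] l by simp
        also have "\<dots> = ?\<rho> (?\<sigma> (Suc k))" using that by simp
        also have "\<dots> = Suc k" using \<rho>_\<sigma>[of "Suc k"] k by simp
        finally show ?thesis .
      qed
      moreover have "Suc (?\<sigma> k) mod n = ?\<sigma> (Suc k)"
        by (simp add: mod_Suc_eq)
      moreover have "?\<sigma> k < n" using n by simp
      ultimately show "(k, l) \<in> snd (Gamma2 (n - 1)) \<longleftrightarrow> (?\<sigma> k, ?\<sigma> l) \<in> snd (Lambda2 n)"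
        using l unfolding mem_snd_Gamma2 mem_snd_Lambda2 by auto
    qed
  qed
qed

theorem proposition5p1:
  fixes n i :: nat
  assumes alg_closed: "\<forall>q :: 'a::field poly. degree q \<ge> 1 \<longrightarrow> (\<exists>x. poly q x = 0)"
    and n2: "n \<ge> 2"
    and i: "i < n"
  shows "cat_equivalent (Lambda2 n)
           (tau_perp (Lambda2 n) (proj_rep (Lambda2 n) i :: 'a rep))
           (Gamma2 (n - 1))"
proof -
  have "i \<in> fst (Lambda2 n)"
    using i by (simp add: Lambda2_def)
  then have "tau_perp (Lambda2 n) (proj_rep (Lambda2 n) i :: 'a rep) =
      {X. is_rep (Lambda2 n) X \<and> rdim X i = 0}"
    by (rule loopless_quiver.tau_perp_proj_rep[OF loopless_quiver_Lambda2[OF n2]])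
  then show ?thesis
    using vertex_deletion.cat_equivalent_vanishing_at_deleted_vertex[OF vertex_deletion_Lambda2[OF n2 i]]
    by simp
qed

end
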